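(* Let $\gamma<1$ and suppose that $$\lim_{x\uparrow\infty}\frac{u_0'(x)}{x^{\gamma-1}}=1.$$ Then, for each $t_0\ge 0$, $$\lim_{x\uparrow\infty} r_x(x,t_0)=\frac{1}{1-\gamma}.$$
   Context: Let $\mu$ be a nonzero finite positive Borel measure on $(0,\infty)$ such that $\int y e^{yz}\mu(dy)<\infty$ for every $z\in\mathbb{R}$. Define $h(z,t):=\int e^{yz-\frac12 y^2 t}\mu(dy)$ for $(z,t)\in\mathbb{R}\times[0,\infty)$. For each $t$, the map $z\mapsto h(z,t)$ is smooth and strictly increasing with range $(0,\infty)$. Let $h^{(-1)}(x,t)$ denote its inverse in $z$. Let $u:(0,\infty)\times[0,\infty)\to\mathbb{R}$ be smooth, strictly increasing and strictly concave in $x$, solving $u_t=\frac12 u_x^2/u_{xx}$, and related to $h$ by $u_x(h(z,t),t)=e^{-z+t/2}$ for all $(z,t)$. Write $u_0(x):=u(x,0)$. The risk tolerance function is $r(x,t):=-u_x(x,t)/u_{xx}(x,t)$. Equivalently, $r(x,t)=h_z(h^{(-1)}(x,t),t)$, and $r_x$ denotes its partial derivative in $x$. *)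

theory Defs
  imports "HOL-Analysis.Analysis" "HOL-Probability.Probability"
begin

definition hfun :: "real measure \<Rightarrow> real \<Rightarrow> real \<Rightarrow> real" where
  "hfun \<mu> z t = (\<integral>y. exp (y * z - (1/2) * y\<^sup>2 * t) \<partial>\<mu>)"

definition dx :: "(real \<Rightarrow> real \<Rightarrow> real) \<Rightarrow> real \<Rightarrow> real \<Rightarrow> real" where
  "dx u x t = deriv (\<lambda>y. u y t) x"

definition risk_tol :: "(real \<Rightarrow> real \<Rightarrow> real) \<Rightarrow> real \<Rightarrow> real \<Rightarrow> real" where
  "risk_tol u x t = - dx u x t / dx (dx u) x t"

definition strictly_concave_on :: "real set \<Rightarrow> (real \<Rightarrow> real) \<Rightarrow> bool" where
  "strictly_concave_on S f \<longleftrightarrow> convex S \<and>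
     (\<forall>x\<in>S. \<forall>y\<in>S. x \<noteq> y \<longrightarrow> (\<forall>a. 0 < a \<and> a < 1 \<longrightarrow>
        f ((1 - a) * x + a * y) > (1 - a) * f x + a * f y))"

end

theory Submission
  imports Defs "HOL-Real_Asymp.Real_Asymp"
begin

text \<open>
  Put a = 1 / (1 - \<gamma>). Since u_0'(h(z,0)) = exp(-z) and h(z,0) \<rightarrow> \<infinity>, the hypothesis
  u_0'(x) ~ x^(\<gamma>-1) says h(z,0) ~ exp(a z). As h(z,0) = \<integral> exp(y z) \<mu>(dy), this growth forces \<mu>
  to have no mass above a and an atom of mass one at a, so by dominated convergence
  exp(-a z) \<integral> y^k exp(y z - y^2 t/2) \<mu>(dy) \<rightarrow> a^k exp(-a^2 t/2) for every t \<ge> 0.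
  Differentiating u_x(h(z,t),t) = exp(-z + t/2) in z gives r(h(z,t),t) = h_z(z,t), hence
  r_x(h(z,t),t) = h_zz / h_z, a ratio of two such moments, which tends to a.
\<close>

lemma has_real_derivative_integral_dominated:
  fixes M :: "real measure" and f f' :: "real \<Rightarrow> real \<Rightarrow> real" and w :: "real \<Rightarrow> real"
  assumes integrable: "\<And>z. integrable M (f z)"
    and measurable: "f' z0 \<in> borel_measurable M"
    and deriv: "AE y in M. \<forall>z. ((\<lambda>z. f z y) has_real_derivative f' z y) (at z)"
    and integrable_bound: "integrable M w"
    and bound: "AE y in M. \<forall>z \<in> ball z0 1. \<bar>f' z y\<bar> \<le> w y"
  shows "((\<lambda>z. \<integral>y. f z y \<partial>M) has_real_derivative (\<integral>y. f' z0 y \<partial>M)) (at z0)"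
proof -
  let ?F = "\<lambda>z. \<integral>y. f z y \<partial>M"
  have "((\<lambda>z. (?F z - ?F z0) / (z - z0)) \<longlongrightarrow> (\<integral>y. f' z0 y \<partial>M)) (at z0 within ball z0 1)"
    unfolding tendsto_at_iff_sequentially
  proof (intro allI impI)
    fix X :: "nat \<Rightarrow> real"
    assume X: "\<forall>i. X i \<in> ball z0 1 - {z0}" and X_lim: "X \<longlonglongrightarrow> z0"
    let ?Q = "\<lambda>i y. (f (X i) y - f z0 y) / (X i - z0)"
    have quotient_eq: "(?F (X i) - ?F z0) / (X i - z0) = (\<integral>y. ?Q i y \<partial>M)" for i
      using integrable by (simp add: integral_diff)
    have "(\<lambda>i. \<integral>y. ?Q i y \<partial>M) \<longlonglongrightarrow> (\<integral>y. f' z0 y \<partial>M)"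
    proof (rule integral_dominated_convergence[where w=w])
      show "\<And>i. ?Q i \<in> borel_measurable M" using integrable by measurable
      show "AE y in M. (\<lambda>i. ?Q i y) \<longlonglongrightarrow> f' z0 y"
        using deriv
      proof eventually_elim
        case (elim y)
        then have "((\<lambda>z. (f z y - f z0 y) / (z - z0)) \<longlongrightarrow> f' z0 y) (at z0)"
          unfolding has_field_derivative_iff by blast
        then show ?case unfolding tendsto_at_iff_sequentially comp_def using X X_lim by auto
      qed
      show "AE y in M. norm (?Q i y) \<le> w y" for i
        using deriv bound
      proof eventually_elim
        case (elim y)
        have "norm (f (X i) y - f z0 y) \<le> w y * norm (X i - z0)"
        proof (rule field_differentiable_bound[where S="ball z0 1" and f'="\<lambda>z. f' z y"])
          show "((\<lambda>z. f z y) has_field_derivative f' z y) (at z within ball z0 1)" for z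
            using elim(1) has_field_derivative_at_within by blast
        qed (use elim(2) X in auto)
        moreover have "X i \<noteq> z0" using X by auto
        ultimately show ?case by (simp add: divide_le_eq abs_divide)
      qed
    qed (use measurable integrable_bound in auto)
    then show "((\<lambda>z. (?F z - ?F z0) / (z - z0)) \<circ> X) \<longlonglongrightarrow> (\<integral>y. f' z0 y \<partial>M)"
      unfolding comp_def quotient_eq .
  qed
  then have "(?F has_real_derivative (\<integral>y. f' z0 y \<partial>M)) (at z0 within ball z0 1)"
    using has_field_derivative_iff by blast
  then show ?thesis using at_within_open[of z0 "ball z0 1"] by simp
qed

locale exp_moment_measure = finite_measure \<mu> for \<mu> :: "real measure" +
  assumes sets_eq_borel: "sets \<mu> = sets borel"
    and emeasure_nonpos: "emeasure \<mu> {..0} = 0"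
    and emeasure_space_nonzero: "emeasure \<mu> (space \<mu>) \<noteq> 0"
    and integrable_exp_moment: "\<And>z. integrable \<mu> (\<lambda>y. y * exp (y * z))"
begin

lemma space_eq_UNIV: "space \<mu> = UNIV"
  using sets_eq_imp_space_eq[OF sets_eq_borel] by simp

lemma borel_measurable_iff [simp]:
  "(f :: real \<Rightarrow> real) \<in> borel_measurable \<mu> \<longleftrightarrow> f \<in> borel_measurable borel"
proof -
  have "borel_measurable \<mu> = (borel_measurable borel :: (real \<Rightarrow> real) set)"
    by (rule measurable_cong_sets[OF sets_eq_borel refl])
  then show ?thesis by simp
qed

lemma AE_pos: "AE y in \<mu>. 0 < y"
proof (rule AE_I')
  show "{..0} \<in> null_sets \<mu>" using emeasure_nonpos sets_eq_borel by (simp add: null_sets_def)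
qed auto

lemma integrable_power_exp: "integrable \<mu> (\<lambda>y. y ^ k * exp (y * c))"
proof (cases k)
  case 0
  have "integrable \<mu> (\<lambda>y. exp \<bar>c\<bar> + y * exp (y * c))"
    using integrable_exp_moment by simp
  then show ?thesis
  proof (rule Bochner_Integration.integrable_bound)
    show "AE y in \<mu>. norm (y ^ k * exp (y * c)) \<le> norm (exp \<bar>c\<bar> + y * exp (y * c))"
      using AE_pos
    proof eventually_elim
      case (elim y)
      have "exp (y * c) \<le> exp \<bar>c\<bar> + y * exp (y * c)"
      proof (cases "y \<le> 1")
        case True
        have "y * c \<le> y * \<bar>c\<bar>" using elim by (intro mult_left_mono) auto
        also have "\<dots> \<le> \<bar>c\<bar>" using elim True by (intro mult_left_le_one_le) auto
        finally have "exp (y * c) \<le> exp \<bar>c\<bar>" by simp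
        moreover have "0 \<le> y * exp (y * c)" using elim by simp
        ultimately show ?thesis by linarith
      next
        case False
        then have "1 * exp (y * c) \<le> y * exp (y * c)" by (intro mult_right_mono) auto
        moreover have "0 < exp \<bar>c\<bar>" by simp
        ultimately show ?thesis by linarith
      qed
      then show ?case using elim 0 by simp
    qed
  qed (simp add: 0)
next
  case (Suc n)
  have "integrable \<mu> (\<lambda>y. y * exp (y * (c + n)))" by (rule integrable_exp_moment)
  then show ?thesis
  proof (rule Bochner_Integration.integrable_bound)
    show "AE y in \<mu>. norm (y ^ k * exp (y * c)) \<le> norm (y * exp (y * (c + n)))"
      using AE_pos
    proof eventually_elim
      case (elim y)
      have "y \<le> exp y" using exp_ge_add_one_self[of y] by linarith
      then have "y ^ n \<le> exp (n * y)"
        using elim by (simp add: exp_of_nat_mult power_mono)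
      then have "y ^ n * exp (y * c) \<le> exp (n * y) * exp (y * c)"
        by (intro mult_right_mono) auto
      also have "\<dots> = exp (y * (c + n))"
        by (simp add: mult_exp_exp algebra_simps)
      finally have "y ^ n * exp (y * c) \<le> exp (y * (c + n))" .
      then show ?case using elim Suc by (simp add: mult.assoc)
    qed
  qed simp
qed

definition hmoment :: "nat \<Rightarrow> real \<Rightarrow> real \<Rightarrow> real" where
  "hmoment k z t = (\<integral>y. y ^ k * exp (y * z - 1/2 * y\<^sup>2 * t) \<partial>\<mu>)"

lemma hfun_eq_hmoment: "hfun \<mu> z t = hmoment 0 z t"
  by (simp add: hfun_def hmoment_def)

lemma integrable_hmoment:
  assumes "0 \<le> t"
  shows "integrable \<mu> (\<lambda>y. y ^ k * exp (y * z - 1/2 * y\<^sup>2 * t))"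
proof (rule Bochner_Integration.integrable_bound[OF integrable_power_exp[of k z]])
  show "AE y in \<mu>. norm (y ^ k * exp (y * z - 1/2 * y\<^sup>2 * t)) \<le> norm (y ^ k * exp (y * z))"
    using AE_pos
  proof eventually_elim
    case (elim y)
    have "exp (y * z - 1/2 * y\<^sup>2 * t) \<le> exp (y * z)" using assms by simp
    then show ?case using elim by (simp add: mult_left_mono)
  qed
qed simp

lemma hmoment_has_derivative:
  assumes "0 \<le> t"
  shows "((\<lambda>z. hmoment k z t) has_real_derivative hmoment (Suc k) z0 t) (at z0)"
  unfolding hmoment_def
proof (rule has_real_derivative_integral_dominated[where w="\<lambda>y. y ^ Suc k * exp (y * (\<bar>z0\<bar> + 1))"])
  show "AE y in \<mu>. \<forall>z. ((\<lambda>z. y ^ k * exp (y * z - 1/2 * y\<^sup>2 * t)) has_real_derivative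
          y ^ Suc k * exp (y * z - 1/2 * y\<^sup>2 * t)) (at z)"
    by (auto intro!: derivative_eq_intros)
  show "AE y in \<mu>. \<forall>z \<in> ball z0 1.
          \<bar>y ^ Suc k * exp (y * z - 1/2 * y\<^sup>2 * t)\<bar> \<le> y ^ Suc k * exp (y * (\<bar>z0\<bar> + 1))"
    using AE_pos
  proof eventually_elim
    case (elim y)
    show ?case
    proof
      fix z assume "z \<in> ball z0 1"
      then have "y * z \<le> y * (\<bar>z0\<bar> + 1)"
        using elim by (intro mult_left_mono) (auto simp: dist_real_def)
      moreover have "0 \<le> y\<^sup>2 * t" using assms by simp
      ultimately have "exp (y * z - 1/2 * y\<^sup>2 * t) \<le> exp (y * (\<bar>z0\<bar> + 1))" by simp
      then show "\<bar>y ^ Suc k * exp (y * z - 1/2 * y\<^sup>2 * t)\<bar> \<le> y ^ Suc k * exp (y * (\<bar>z0\<bar> + 1))"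
        using elim by (simp add: mult_left_mono)
    qed
  qed
  show "integrable \<mu> (\<lambda>y. y ^ Suc k * exp (y * (\<bar>z0\<bar> + 1)))"
    by (rule integrable_power_exp)
qed (use assms integrable_hmoment in auto)

lemma hmoment_pos:
  assumes "0 \<le> t"
  shows "0 < hmoment k z t"
proof -
  have nonneg: "AE y in \<mu>. 0 \<le> y ^ k * exp (y * z - 1/2 * y\<^sup>2 * t)"
    using AE_pos by eventually_elim simp
  have "hmoment k z t \<noteq> 0"
  proof
    assume "hmoment k z t = 0"
    then have "AE y in \<mu>. y ^ k * exp (y * z - 1/2 * y\<^sup>2 * t) = 0"
      unfolding hmoment_def using integral_nonneg_eq_0_iff_AE[OF integrable_hmoment[OF assms] nonneg]
      by simp
    with AE_pos have "AE y in \<mu>. False" by eventually_elim simp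
    then show False
      using emeasure_space_nonzero ae_filter_eq_bot_iff trivial_limit_def by metis
  qed
  moreover have "0 \<le> hmoment k z t"
    unfolding hmoment_def using nonneg by (rule integral_nonneg_AE)
  ultimately show ?thesis by simp
qed

lemma hfun_has_derivative:
  assumes "0 \<le> t"
  shows "((\<lambda>z. hfun \<mu> z t) has_real_derivative hmoment 1 z t) (at z)"
  using hmoment_has_derivative[OF assms, of 0] by (simp add: hfun_eq_hmoment)

lemma hfun_pos: "0 \<le> t \<Longrightarrow> 0 < hfun \<mu> z t"
  using hmoment_pos by (simp add: hfun_eq_hmoment)

lemma mono_hfun:
  assumes "0 \<le> t"
  shows "mono (\<lambda>z. hfun \<mu> z t)"
proof (rule monoI)
  fix x y :: real
  assume "x \<le> y"
  then show "hfun \<mu> x t \<le> hfun \<mu> y t"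
  proof (rule DERIV_nonneg_imp_nondecreasing)
    fix z
    show "\<exists>d. ((\<lambda>z. hfun \<mu> z t) has_real_derivative d) (at z) \<and> 0 \<le> d"
      using hfun_has_derivative[OF assms] hmoment_pos[OF assms] less_imp_le by blast
  qed
qed

lemma exists_measure_pos_above:
  assumes "emeasure \<mu> {c<..} \<noteq> 0"
  shows "\<exists>b>c. 0 < measure \<mu> {b..}"
proof (rule ccontr)
  assume no_mass: "\<not> ?thesis"
  have "{c + 1 / Suc n..} \<in> null_sets \<mu>" for n
  proof -
    have "c < c + 1 / Suc n" by simp
    then have "measure \<mu> {c + 1 / Suc n..} = 0"
      using no_mass by (metis less_eq_real_def measure_nonneg)
    then show ?thesis by (simp add: null_sets_def sets_eq_borel emeasure_eq_measure)
  qed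
  then have "(\<Union>n. {c + 1 / Suc n..}) \<in> null_sets \<mu>" by blast
  moreover have "(\<Union>n. {c + 1 / Suc n..}) = {c<..}"
  proof (intro subset_antisym subsetI)
    fix x assume "x \<in> {c<..}"
    then obtain n where "1 / Suc n < x - c" using nat_approx_posE[of "x - c"] by auto
    then have "x \<in> {c + 1 / Suc n..}" by simp
    then show "x \<in> (\<Union>n. {c + 1 / Suc n..})" by blast
  next
    fix x assume "x \<in> (\<Union>n. {c + 1 / Suc n..})"
    then obtain n where "c + 1 / Suc n \<le> x" by auto
    moreover have "0 < 1 / Suc n" by simp
    ultimately have "c < x" by linarith
    then show "x \<in> {c<..}" by simp
  qed
  ultimately show False using assms by (simp add: null_sets_def)
qed

lemma hfun_lower_bound:
  assumes "0 \<le> z"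
  shows "measure \<mu> {b..} * exp (b * z) \<le> hfun \<mu> z 0"
proof -
  have "measure \<mu> {b..} * exp (b * z) = (\<integral>y. indicator {b..} y * exp (b * z) \<partial>\<mu>)"
    by (simp add: space_eq_UNIV)
  also have "\<dots> \<le> (\<integral>y. exp (y * z) \<partial>\<mu>)"
  proof (rule integral_mono)
    show "integrable \<mu> (\<lambda>y. indicator {b..} y * exp (b * z))"
      by (simp add: integrable_indicator_iff sets_eq_borel emeasure_eq_measure)
    show "integrable \<mu> (\<lambda>y. exp (y * z))"
      using integrable_power_exp[of 0 z] by simp
    show "indicator {b..} y * exp (b * z) \<le> exp (y * z)" for y
      using assms by (cases "b \<le> y") (auto intro: mult_right_mono)
  qed
  finally show ?thesis by (simp add: hfun_def)
qed

lemma filterlim_hfun_0_at_top: "filterlim (\<lambda>z. hfun \<mu> z 0) at_top at_top"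
proof -
  have "emeasure \<mu> {0<..} = emeasure \<mu> ({0<..} \<union> {..0})"
    using emeasure_nonpos
    by (intro emeasure_Un_null_set[symmetric]) (auto simp: null_sets_def sets_eq_borel)
  also have "{0<..} \<union> {..0} = space \<mu>" by (auto simp: space_eq_UNIV)
  finally have "emeasure \<mu> {0<..} \<noteq> 0" using emeasure_space_nonzero by simp
  then obtain b where "0 < b" "0 < measure \<mu> {b..}" using exists_measure_pos_above by blast
  then have "filterlim (\<lambda>z. measure \<mu> {b..} * exp (b * z)) at_top at_top" by real_asymp
  moreover have "\<forall>\<^sub>F z in at_top. measure \<mu> {b..} * exp (b * z) \<le> hfun \<mu> z 0"
    using eventually_ge_at_top[of 0] by eventually_elim (simp add: hfun_lower_bound)
  ultimately show ?thesis by (rule filterlim_at_top_mono)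
qed

end

locale hfun_exp_asymptotic = exp_moment_measure +
  fixes a :: real
  assumes rate_pos: "0 < a"
    and hfun_asymptotic: "((\<lambda>z. exp (- a * z) * hfun \<mu> z 0) \<longlongrightarrow> 1) at_top"
begin

lemma emeasure_above_rate: "emeasure \<mu> {a<..} = 0"
proof (rule ccontr)
  assume "emeasure \<mu> {a<..} \<noteq> 0"
  then obtain b where "a < b" "0 < measure \<mu> {b..}" using exists_measure_pos_above by blast
  then have "filterlim (\<lambda>z. measure \<mu> {b..} * exp ((b - a) * z)) at_top at_top" by real_asymp
  moreover have "\<forall>\<^sub>F z in at_top. measure \<mu> {b..} * exp ((b - a) * z) \<le> exp (- a * z) * hfun \<mu> z 0"
    using eventually_ge_at_top[of 0]
  proof eventually_elim
    case (elim z)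
    have "measure \<mu> {b..} * exp ((b - a) * z) = exp (- a * z) * (measure \<mu> {b..} * exp (b * z))"
      by (simp add: exp_add[symmetric] algebra_simps)
    also have "\<dots> \<le> exp (- a * z) * hfun \<mu> z 0" using hfun_lower_bound[OF elim] by simp
    finally show ?case .
  qed
  ultimately have "filterlim (\<lambda>z. exp (- a * z) * hfun \<mu> z 0) at_top at_top"
    by (rule filterlim_at_top_mono)
  then show False
    using hfun_asymptotic not_tendsto_and_filterlim_at_infinity[OF trivial_limit_at_top_linorder]
      filterlim_at_top_imp_at_infinity by blast
qed

lemma AE_le_rate: "AE y in \<mu>. 0 < y \<and> y \<le> a"
proof -
  have "AE y in \<mu>. y \<le> a"
  proof (rule AE_I')
    show "{a<..} \<in> null_sets \<mu>" using emeasure_above_rate by (simp add: null_sets_def sets_eq_borel)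
  qed auto
  with AE_pos show ?thesis by eventually_elim simp
qed

lemma hmoment_scaled_tendsto_atom:
  assumes "0 \<le> t"
  shows "((\<lambda>z. exp (- a * z) * hmoment k z t)
           \<longlongrightarrow> measure \<mu> {a} * (a ^ k * exp (- 1/2 * a\<^sup>2 * t))) at_top"
proof -
  let ?c = "a ^ k * exp (- 1/2 * a\<^sup>2 * t)"
  have scaled_eq: "exp (- a * z) * hmoment k z t = (\<integral>y. y ^ k * exp ((y - a) * z - 1/2 * y\<^sup>2 * t) \<partial>\<mu>)"
    for z
    unfolding hmoment_def integral_mult_right_zero[symmetric]
    by (rule Bochner_Integration.integral_cong) (simp_all add: exp_add[symmetric] algebra_simps)
  have "((\<lambda>z. \<integral>y. y ^ k * exp ((y - a) * z - 1/2 * y\<^sup>2 * t) \<partial>\<mu>) \<longlongrightarrow> (\<integral>y. indicator {a} y * ?c \<partial>\<mu>)) at_top"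
  proof (rule integral_dominated_convergence_at_top[where w="\<lambda>_. a ^ k"])
    show "AE y in \<mu>. ((\<lambda>z. y ^ k * exp ((y - a) * z - 1/2 * y\<^sup>2 * t)) \<longlongrightarrow> indicator {a} y * ?c) at_top"
      using AE_le_rate
    proof eventually_elim
      case (elim y)
      show ?case
      proof (cases "y = a")
        case False
        with elim have "y < a" by simp
        then have "((\<lambda>z. y ^ k * exp ((y - a) * z - 1/2 * y\<^sup>2 * t)) \<longlongrightarrow> 0) at_top" by real_asymp
        then show ?thesis using False by simp
      qed simp
    qed
    show "\<forall>\<^sub>F z in at_top. AE y in \<mu>. norm (y ^ k * exp ((y - a) * z - 1/2 * y\<^sup>2 * t)) \<le> a ^ k"
      using eventually_ge_at_top[of 0]
    proof eventually_elim
      case z: (elim z)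
      show ?case using AE_le_rate
      proof eventually_elim
        case (elim y)
        have "(y - a) * z \<le> 0" using elim z by (simp add: mult_nonpos_nonneg)
        moreover have "0 \<le> y\<^sup>2 * t" using assms by simp
        ultimately have "exp ((y - a) * z - 1/2 * y\<^sup>2 * t) \<le> 1" by simp
        moreover have "y ^ k \<le> a ^ k" using elim by (intro power_mono) auto
        ultimately have "y ^ k * exp ((y - a) * z - 1/2 * y\<^sup>2 * t) \<le> a ^ k * 1"
          using elim by (intro mult_mono) auto
        then show ?case using elim by simp
      qed
    qed
  qed simp_all
  then show ?thesis unfolding scaled_eq by (simp add: space_eq_UNIV)
qed

lemma measure_rate_atom: "measure \<mu> {a} = 1"
proof -
  have "((\<lambda>z. exp (- a * z) * hfun \<mu> z 0) \<longlongrightarrow> measure \<mu> {a}) at_top"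
    using hmoment_scaled_tendsto_atom[of 0 0] by (simp add: hfun_eq_hmoment)
  with hfun_asymptotic show ?thesis using tendsto_unique[OF trivial_limit_at_top_linorder] by blast
qed

lemma hmoment_scaled_tendsto:
  "0 \<le> t \<Longrightarrow> ((\<lambda>z. exp (- a * z) * hmoment k z t) \<longlongrightarrow> a ^ k * exp (- 1/2 * a\<^sup>2 * t)) at_top"
  using hmoment_scaled_tendsto_atom measure_rate_atom by simp

lemma hmoment_ratio_tendsto:
  assumes "0 \<le> t"
  shows "((\<lambda>z. hmoment (Suc k) z t / hmoment k z t) \<longlongrightarrow> a) at_top"
proof -
  let ?E = "exp (- 1/2 * a\<^sup>2 * t)"
  have "((\<lambda>z. (exp (- a * z) * hmoment (Suc k) z t) / (exp (- a * z) * hmoment k z t))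
          \<longlongrightarrow> a ^ Suc k * ?E / (a ^ k * ?E)) at_top"
    using rate_pos by (intro tendsto_divide hmoment_scaled_tendsto assms) simp
  then show ?thesis using rate_pos by simp
qed

lemma filterlim_hfun_at_top:
  assumes "0 \<le> t"
  shows "filterlim (\<lambda>z. hfun \<mu> z t) at_top at_top"
proof -
  have "filterlim (\<lambda>z. exp (- a * z) * hfun \<mu> z t * exp (a * z)) at_top at_top"
  proof (rule filterlim_tendsto_pos_mult_at_top)
    show "((\<lambda>z. exp (- a * z) * hfun \<mu> z t) \<longlongrightarrow> exp (- 1/2 * a\<^sup>2 * t)) at_top"
      using hmoment_scaled_tendsto[OF assms, of 0] by (simp add: hfun_eq_hmoment)
    show "filterlim (\<lambda>z. exp (a * z)) at_top at_top" using rate_pos by real_asymp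
  qed simp
  then show ?thesis by (simp add: exp_minus field_simps)
qed

end

lemma exp_rate_of_powr_asymptotic:
  fixes U h :: "real \<Rightarrow> real" and \<gamma> :: real
  assumes U_asymp: "((\<lambda>x. U x / x powr (\<gamma> - 1)) \<longlongrightarrow> 1) at_top"
    and h_at_top: "filterlim h at_top at_top"
    and U_h: "\<And>z. U (h z) = exp (- z)"
    and h_pos: "\<And>z. 0 < h z"
    and "\<gamma> < 1"
  shows "((\<lambda>z. exp (- (1 / (1 - \<gamma>)) * z) * h z) \<longlongrightarrow> 1) at_top"
proof -
  define a where "a = 1 / (1 - \<gamma>)"
  define q where "q z = exp (- z) / h z powr (\<gamma> - 1)" for z
  have "(q \<longlongrightarrow> 1) at_top"
    using filterlim_compose[OF U_asymp h_at_top] unfolding q_def[abs_def] U_h .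
  then have "((\<lambda>z. q z powr a) \<longlongrightarrow> 1 powr a) at_top"
    by (intro tendsto_powr tendsto_const) simp_all
  moreover have "q z powr a = exp (- a * z) * h z" for z
  proof -
    have "q z = exp (- z - (\<gamma> - 1) * ln (h z))"
      unfolding q_def using h_pos[of z] by (simp add: powr_def exp_diff)
    moreover have "a * (- z - (\<gamma> - 1) * ln (h z)) = - a * z + ln (h z)"
      using \<open>\<gamma> < 1\<close> unfolding a_def by (simp add: field_simps)
    ultimately have "q z powr a = exp (ln (h z) - a * z)" using h_pos[of z] by (simp add: powr_def)
    also have "\<dots> = exp (- a * z) * h z" using h_pos[of z] by (simp add: exp_diff exp_minus field_simps)
    finally show ?thesis .
  qed
  ultimately show ?thesis unfolding a_def by simp
qed

lemma deriv_risk_tol_along_inverse_marginal: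
  fixes u :: "real \<Rightarrow> real \<Rightarrow> real" and h h' h'' :: "real \<Rightarrow> real" and t z :: real
  assumes smooth: "\<And>x n. 0 < x \<Longrightarrow> (deriv ^^ n) (\<lambda>y. u y t) differentiable (at x)"
    and marginal: "\<And>z. dx u (h z) t = exp (- z + t / 2)"
    and h_deriv: "\<And>z. (h has_real_derivative h' z) (at z)"
    and h'_deriv: "\<And>z. (h' has_real_derivative h'' z) (at z)"
    and h_pos: "\<And>z. 0 < h z"
    and h'_pos: "\<And>z. 0 < h' z"
  shows "deriv (\<lambda>x. risk_tol u x t) (h z) = h'' z / h' z"
proof -
  define f where "f = (\<lambda>y. u y t)"
  have dx_eq: "dx u x t = deriv f x" "dx (dx u) x t = deriv (deriv f) x" for x
    by (simp_all add: dx_def f_def)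
  have f'_diff: "deriv f differentiable (at x)" if "0 < x" for x
    using smooth[OF that, of 1] by (simp add: f_def)
  have f''_diff: "deriv (deriv f) differentiable (at x)" if "0 < x" for x
    using smooth[OF that, of 2] by (simp add: f_def numeral_2_eq_2)
  have f'_h: "deriv f (h z) = exp (- z + t / 2)" for z
    using marginal dx_eq by simp
  have f''_h: "deriv (deriv f) (h z) * h' z = - exp (- z + t / 2)" for z
  proof (rule DERIV_unique)
    show "((\<lambda>z. deriv f (h z)) has_real_derivative deriv (deriv f) (h z) * h' z) (at z)"
      using f'_diff[OF h_pos] h_deriv
      by (intro DERIV_chain2[of "deriv f"]) (simp_all add: DERIV_deriv_iff_real_differentiable)
    show "((\<lambda>z. deriv f (h z)) has_real_derivative - exp (- z + t / 2)) (at z)"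
      unfolding f'_h by (auto intro!: derivative_eq_intros)
  qed
  then have f''_nonzero: "deriv (deriv f) (h z) \<noteq> 0" for z
    by (metis exp_not_eq_zero mult_zero_left neg_equal_0_iff_equal)
  have r_eq: "(\<lambda>x. risk_tol u x t) = (\<lambda>x. - deriv f x / deriv (deriv f) x)"
    by (simp add: risk_tol_def dx_eq)
  have r_h: "risk_tol u (h z) t = h' z" for z
    using f''_h[of z] f'_h[of z] f''_nonzero[of z] unfolding risk_tol_def dx_eq
    by (simp add: field_simps)
  have "(\<lambda>x. risk_tol u x t) differentiable (at (h z))"
    unfolding r_eq using f'_diff[OF h_pos] f''_diff[OF h_pos] f''_nonzero
    by (auto intro!: derivative_intros)
  then have "((\<lambda>z. risk_tol u (h z) t) has_real_derivative deriv (\<lambda>x. risk_tol u x t) (h z) * h' z) (at z)"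
    using h_deriv by (intro DERIV_chain2[of "\<lambda>x. risk_tol u x t"]) (simp_all add: DERIV_deriv_iff_real_differentiable)
  moreover have "((\<lambda>z. risk_tol u (h z) t) has_real_derivative h'' z) (at z)"
    unfolding r_h by (rule h'_deriv)
  ultimately have "deriv (\<lambda>x. risk_tol u x t) (h z) * h' z = h'' z" by (rule DERIV_unique)
  then show ?thesis using h'_pos[of z] by (simp add: field_simps)
qed

lemma tendsto_at_top_reparametrize:
  fixes f g h :: "real \<Rightarrow> real"
  assumes g_lim: "(g \<longlongrightarrow> l) at_top"
    and h_at_top: "filterlim h at_top at_top"
    and h_cont: "\<And>z. isCont h z"
    and h_mono: "mono h"
    and f_h: "\<And>z. f (h z) = g z"
  shows "(f \<longlongrightarrow> l) at_top"
proof -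
  have h_surj: "\<exists>z. h z = x" if "h 0 \<le> x" for x
  proof -
    obtain N where "\<And>z. N \<le> z \<Longrightarrow> x \<le> h z"
      using h_at_top unfolding filterlim_at_top eventually_at_top_linorder by blast
    then show ?thesis using IVT[of h 0 x "max N 0"] that h_cont by force
  qed
  define h_inv where "h_inv x = (SOME z. h z = x)" for x
  have h_inv: "h (h_inv x) = x" if "h 0 \<le> x" for x
    unfolding h_inv_def using someI_ex[OF h_surj[OF that]] .
  have "filterlim h_inv at_top at_top"
    unfolding filterlim_at_top
  proof
    fix Z
    show "\<forall>\<^sub>F x in at_top. Z \<le> h_inv x"
      using eventually_gt_at_top[of "max (h Z) (h 0)"]
    proof eventually_elim
      case (elim x)
      show ?case
      proof (rule ccontr)
        assume "\<not> Z \<le> h_inv x"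
        then have "h (h_inv x) \<le> h Z" using h_mono by (simp add: monoD)
        then show False using h_inv[of x] elim by simp
      qed
    qed
  qed
  then have "((\<lambda>x. g (h_inv x)) \<longlongrightarrow> l) at_top" by (rule filterlim_compose[OF g_lim])
  moreover have "\<forall>\<^sub>F x in at_top. g (h_inv x) = f x"
    using eventually_ge_at_top[of "h 0"] by eventually_elim (metis f_h h_inv)
  ultimately show ?thesis by (rule Lim_transform_eventually)
qed

theorem corollary4:
  fixes \<mu> :: "real measure" and u :: "real \<Rightarrow> real \<Rightarrow> real" and \<gamma> t0 :: real
  assumes sets_mu: "sets \<mu> = sets borel"
    and fin: "finite_measure \<mu>"
    and supp: "emeasure \<mu> {..0} = 0"
    and nonzero: "emeasure \<mu> (space \<mu>) \<noteq> 0"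
    and integ: "\<And>z. integrable \<mu> (\<lambda>y. y * exp (y * z))"
    and smooth_x: "\<And>x t n. x > 0 \<Longrightarrow> t \<ge> 0 \<Longrightarrow>
                     (deriv ^^ n) (\<lambda>y. u y t) differentiable (at x)"
    and incr: "\<And>t. t \<ge> 0 \<Longrightarrow> strict_mono_on {0<..} (\<lambda>x. u x t)"
    and conc: "\<And>t. t \<ge> 0 \<Longrightarrow> strictly_concave_on {0<..} (\<lambda>x. u x t)"
    and pde: "\<And>x t. x > 0 \<Longrightarrow> t \<ge> 0 \<Longrightarrow>
                ((\<lambda>s. u x s) has_real_derivative
                   ((1/2) * (dx u x t)\<^sup>2 / dx (dx u) x t)) (at t within {0..})"
    and rel: "\<And>z t. t \<ge> 0 \<Longrightarrow> dx u (hfun \<mu> z t) t = exp (- z + t / 2)"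
    and gam: "\<gamma> < 1"
    and lim0: "((\<lambda>x. dx u x 0 / x powr (\<gamma> - 1)) \<longlongrightarrow> 1) at_top"
    and t0: "t0 \<ge> 0"
  shows "((\<lambda>x. deriv (\<lambda>y. risk_tol u y t0) x) \<longlongrightarrow> 1 / (1 - \<gamma>)) at_top"
proof -
  interpret exp_moment_measure \<mu>
    by (rule exp_moment_measure.intro[OF fin exp_moment_measure_axioms.intro[OF sets_mu supp nonzero integ]])
  define a where "a = 1 / (1 - \<gamma>)"
  have "((\<lambda>z. exp (- a * z) * hfun \<mu> z 0) \<longlongrightarrow> 1) at_top"
    unfolding a_def
  proof (rule exp_rate_of_powr_asymptotic[OF lim0 filterlim_hfun_0_at_top _ _ gam])
    show "dx u (hfun \<mu> z 0) 0 = exp (- z)" for z using rel[of 0 z] by simp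
  qed (rule hfun_pos, simp)
  moreover have "0 < a" using gam by (simp add: a_def)
  ultimately interpret hfun_exp_asymptotic \<mu> a by unfold_locales
  have risk_tol_hfun: "deriv (\<lambda>x. risk_tol u x t0) (hfun \<mu> z t0) = hmoment 2 z t0 / hmoment 1 z t0" for z
  proof (rule deriv_risk_tol_along_inverse_marginal[where h="\<lambda>z. hfun \<mu> z t0"
        and h'="\<lambda>z. hmoment 1 z t0" and h''="\<lambda>z. hmoment 2 z t0"])
    show "((\<lambda>z. hmoment 1 z t0) has_real_derivative hmoment 2 z t0) (at z)" for z
      using hmoment_has_derivative[OF t0, of 1] by (simp add: numeral_2_eq_2)
  qed (use smooth_x t0 rel hfun_has_derivative hfun_pos hmoment_pos in auto)
  show ?thesis
  proof (rule tendsto_at_top_reparametrize[OF _ filterlim_hfun_at_top[OF t0]])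
    show "((\<lambda>z. hmoment 2 z t0 / hmoment 1 z t0) \<longlongrightarrow> 1 / (1 - \<gamma>)) at_top"
      using hmoment_ratio_tendsto[OF t0, of 1] by (simp add: a_def numeral_2_eq_2)
    show "isCont (\<lambda>z. hfun \<mu> z t0) z" for z
      using hfun_has_derivative[OF t0] by (rule DERIV_isCont)
  qed (use mono_hfun[OF t0] risk_tol_hfun in auto)
qed

end
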